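(* Let $q\ge2$. If $f$ is a $q$-quasiadditive function, then $f(0)=0$ and $f(qa)=f(a)$ for all nonnegative integers $a$. If $f$ is a $q$-quasimultiplicative function, then $f(0)=1$ unless $f$ is identically $0$, and $f(qa)=f(a)$ for all nonnegative integers $a$.
   Context: A function $f$ on the nonnegative integers is $q$-quasiadditive if there is a nonnegative integer $r$ such that $f(q^{k+r}a+b)=f(a)+f(b)$ for all nonnegative integers $a,b,k$ with $0\le b<q^k$; it is $q$-quasimultiplicative if there is a nonnegative integer $r$ such that $f(q^{k+r}a+b)=f(a)f(b)$ for all such $a,b,k$. *)

theory Defs
  imports Complex_Main
begin

definition q_quasiadditive :: "nat \<Rightarrow> (nat \<Rightarrow> complex) \<Rightarrow> bool" where
  "q_quasiadditive q f \<longleftrightarrow> (\<exists>r::nat. \<forall>a b k::nat. b < q ^ k \<longrightarrow>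
      f (q ^ (k + r) * a + b) = f a + f b)"

definition q_quasimultiplicative :: "nat \<Rightarrow> (nat \<Rightarrow> complex) \<Rightarrow> bool" where
  "q_quasimultiplicative q f \<longleftrightarrow> (\<exists>r::nat. \<forall>a b k::nat. b < q ^ k \<longrightarrow>
      f (q ^ (k + r) * a + b) = f a * f b)"

end

theory Submission
  imports Defs
begin

text \<open>All claims come from evaluating the defining identity at tiny arguments.
With \<open>a = b = k = 0\<close> one gets \<open>f 0 = f 0 + f 0\<close>, resp. \<open>f 0 = f 0 * f 0\<close>.
Both \<open>q a\<close> (with \<open>k = 0\<close>) and \<open>a\<close> (with \<open>k = 1\<close>) are placed in front of the
same block of \<open>r + 1\<close> zero digits, so \<open>f (q a) \<star> f 0 = f a \<star> f 0\<close>; this gives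
\<open>f (q a) = f a\<close> once \<open>f 0\<close> is the neutral element. Finally, in the
multiplicative case \<open>f 0 = 0\<close> forces \<open>f n = f (q^r \<cdot> 0 + n) = f 0 * f n = 0\<close>.\<close>

lemma scaled_blocks_same_value:
  fixes f :: "nat \<Rightarrow> 'a" and op :: "'a \<Rightarrow> 'a \<Rightarrow> 'a"
  assumes "q \<ge> 2"
    and H: "\<And>a b k. b < q ^ k \<Longrightarrow> f (q ^ (k + r) * a + b) = op (f a) (f b)"
  shows "op (f (q * a)) (f 0) = op (f a) (f 0)"
proof -
  have "q ^ (0 + r) * (q * a) + 0 = q ^ (1 + r) * a + 0"
    by (simp add: mult_ac)
  then show ?thesis
    using H[of 0 0 "q * a"] H[of 0 1 a] \<open>q \<ge> 2\<close> by (simp only: power_0) simp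
qed

lemma q_quasiadditive_at_0:
  assumes "q_quasiadditive q f"
  shows "f 0 = 0"
proof -
  from assms obtain r where "f (q ^ (0 + r) * 0 + 0) = f 0 + f 0"
    unfolding q_quasiadditive_def by (metis less_one power_0)
  then show ?thesis by simp
qed

lemma q_quasiadditive_mult_base:
  assumes "q \<ge> 2" and "q_quasiadditive q f"
  shows "f (q * a) = f a"
proof -
  from assms(2) obtain r
    where "\<And>a b k. b < q ^ k \<Longrightarrow> f (q ^ (k + r) * a + b) = f a + f b"
    unfolding q_quasiadditive_def by blast
  with \<open>q \<ge> 2\<close> have "f (q * a) + f 0 = f a + f 0"
    by (rule scaled_blocks_same_value)
  then show ?thesis by simp
qed

lemma q_quasimultiplicative_at_0:
  assumes "q \<ge> 2" and "q_quasimultiplicative q f"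
  shows "f 0 = 1 \<or> (\<forall>n. f n = 0)"
proof -
  from assms(2) obtain r
    where H: "\<And>a b k. b < q ^ k \<Longrightarrow> f (q ^ (k + r) * a + b) = f a * f b"
    unfolding q_quasimultiplicative_def by blast
  have idem: "f 0 = f 0 * f 0"
    using H[of 0 0 0] by simp
  have "f n = 0" if "f 0 = 0" for n
  proof -
    have "n < 2 ^ n" by (rule less_exp)
    also have "\<dots> \<le> q ^ n" using \<open>q \<ge> 2\<close> by (rule power_mono) simp
    finally show ?thesis using H[of n n 0] that by simp
  qed
  with idem show ?thesis
    by (metis mult_cancel_left1)
qed

lemma q_quasimultiplicative_mult_base:
  assumes "q \<ge> 2" and "q_quasimultiplicative q f"
  shows "f (q * a) = f a"
  using q_quasimultiplicative_at_0[OF assms]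
proof
  assume "f 0 = 1"
  from assms(2) obtain r
    where "\<And>a b k. b < q ^ k \<Longrightarrow> f (q ^ (k + r) * a + b) = f a * f b"
    unfolding q_quasimultiplicative_def by blast
  with \<open>q \<ge> 2\<close> have "f (q * a) * f 0 = f a * f 0"
    by (rule scaled_blocks_same_value)
  with \<open>f 0 = 1\<close> show ?thesis by simp
qed simp

theorem lemma6:
  fixes q :: nat
  assumes "q \<ge> 2"
  shows "(\<forall>f. q_quasiadditive q f \<longrightarrow> f 0 = 0 \<and> (\<forall>a. f (q * a) = f a))
       \<and> (\<forall>f. q_quasimultiplicative q f \<longrightarrow>
            (f 0 = 1 \<or> (\<forall>n. f n = 0)) \<and> (\<forall>a. f (q * a) = f a))"
  using assms q_quasiadditive_at_0 q_quasiadditive_mult_base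
    q_quasimultiplicative_at_0 q_quasimultiplicative_mult_base
  by blast

end
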